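(* Let $\mathbb{S}=\mathbb{R}/2\pi\mathbb{Z}$ and, for $t\in\mathbb{S}$, let $$U_3(t)=\bigl(\cos t,\ \sin t,\ \cos 3t,\ \sin 3t,\ \cos 5t,\ \sin 5t\bigr)\in\mathbb{R}^6.$$ For a non-negative integer $m$, define $\Psi_m:\mathbb{S}\to\mathbb{R}^{6(m+1)}$ by $$\Psi_m(t)=\bigl(U_3(t),\ U_3(3t),\ \ldots,\ U_3(3^m t)\bigr).$$ Let $A_m\subset\mathbb{S}$ be the set of $4\cdot 3^{m+1}$ equally spaced points $$A_m=\left\{\frac{2\pi j}{4\cdot 3^{m+1}}:\ j=0,\ldots,4\cdot 3^{m+1}-1\right\},$$ and let $P_m=\operatorname{conv}\bigl(\Psi_m(t):\ t\in A_m\bigr)$. Then $P_m$ is a centrally symmetric polytope (i.e. $P_m=-P_m$) of dimension $d=4m+6$ that has exactly $4\cdot 3^{m+1}$ vertices, namely the points $\Psi_m(t)$ for $t\in A_m$. Moreover, for $t_1,t_2\in A_m$ with $t_1\neq t_2$ and $t_1\neq t_2+\pi \pmod{2\pi}$, the segment $[\Psi_m(t_1),\Psi_m(t_2)]$ is an edge of $P_m$.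
   Context: A polytope is the convex hull of finitely many points in $\mathbb{R}^d$. A face of a convex body is its intersection with a supporting affine hyperplane; an edge is a one-dimensional face. The dimension of a polytope is the dimension of its affine hull. *)

theory Defs
  imports "HOL-Analysis.Analysis"
begin

definition U3_coord :: "nat \<Rightarrow> real \<Rightarrow> real" where
  "U3_coord r s =
     (if r = 0 then cos s else if r = 1 then sin s
      else if r = 2 then cos (3 * s) else if r = 3 then sin (3 * s)
      else if r = 4 then cos (5 * s) else sin (5 * s))"

definition Psi_coord :: "nat \<Rightarrow> real \<Rightarrow> real" where
  "Psi_coord k t = U3_coord (k mod 6) (3 ^ (k div 6) * t)"

text \<open>Psi_m realised in a Euclidean space indexed by a finite type 'n, via a
  coordinate enumeration idx : 'n -> {0..<6(m+1)}.\<close>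
definition Psi :: "('n::finite \<Rightarrow> nat) \<Rightarrow> real \<Rightarrow> real ^ 'n" where
  "Psi idx t = (\<chi> i. Psi_coord (idx i) t)"

definition A_set :: "nat \<Rightarrow> real set" where
  "A_set m = {2 * pi * real j / real (4 * 3 ^ (m + 1)) | j. j < 4 * 3 ^ (m + 1)}"

end

theory Submission
  imports Defs
begin

text \<open>The coordinates of \<open>Psi_m\<close> are \<open>cos (f t)\<close> and \<open>sin (f t)\<close> for the \<open>2m + 3\<close> odd
  frequencies \<open>f = 3^q\<close> (\<open>q \<le> m + 1\<close>) and \<open>f = 5 * 3^q\<close> (\<open>q \<le> m\<close>). All frequencies being odd,
  \<open>Psi_m (t + pi) = - Psi_m t\<close>, so \<open>P_m\<close> is centrally symmetric; discrete orthogonality of these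
  harmonics on the \<open>N = 4 * 3^(m+1)\<close> points of \<open>A_m\<close> gives \<open>dim P_m = 2 (2m + 3)\<close>.

  A function \<open>\<beta> + a \<bullet> Psi_m t\<close> that is nonnegative on \<open>A_m\<close> cuts out the exposed face spanned by
  its zeros, so faces are certified by nonnegative trigonometric polynomials with the frequencies of
  \<open>Psi_m\<close>. For a vertex \<open>t\<^sub>0\<close> take \<open>1 - cos (t - t\<^sub>0)\<close>. For two points of \<open>A_m\<close> that are \<open>e\<close>
  grid steps apart, \<open>0 < e < N/2\<close>, a polynomial vanishing exactly there is a cubic in \<open>cos (t - c)\<close>
  if \<open>3e < N\<close>. Otherwise one starts from a polynomial vanishing exactly on the orbits of the two
  points under rotation by \<open>2 pi/3\<close> and adds a small multiple of a correction that is positive at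
  the unwanted points of these orbits. The orbit polynomial is an edge polynomial of level \<open>m - 1\<close>
  composed with \<open>t \<mapsto> 3t\<close>, so the construction is an induction on \<open>m\<close>.\<close>

section \<open>Frequencies of the coordinates and affine functions of \<open>Psi\<close>\<close>

definition coord_freq :: "nat \<Rightarrow> nat" where
  "coord_freq k = 3 ^ (k div 6) * (2 * (k mod 6 div 2) + 1)"

definition trig :: "bool \<Rightarrow> real \<Rightarrow> real" where
  "trig p x = (if p then cos x else sin x)"

lemma Psi_coord_eq: "Psi_coord k t = trig (even k) (real (coord_freq k) * t)"
proof -
  have "k mod 6 \<in> {0, 1, 2, 3, 4, 5}" by auto
  moreover have "even k \<longleftrightarrow> even (k mod 6)" by presburger
  ultimately show ?thesis
    by (auto simp: Psi_coord_def U3_coord_def coord_freq_def trig_def algebra_simps)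
qed

lemma odd_coord_freq: "odd (coord_freq k)"
  by (simp add: coord_freq_def)

lemma Psi_coord_add_2pi_int: "Psi_coord k (t + 2 * pi * of_int n) = Psi_coord k t"
proof -
  have "real (coord_freq k) * (t + 2 * pi * of_int n)
      = real (coord_freq k) * t + 2 * pi * of_int (int (coord_freq k) * n)"
    by (simp add: algebra_simps)
  then show ?thesis
    unfolding Psi_coord_eq trig_def by (simp only: cos_add sin_add cos_int_2pin sin_int_2pin) simp
qed

lemma Psi_coord_add_pi: "Psi_coord k (t + pi) = - Psi_coord k t"
proof -
  have "real (coord_freq k) * (t + pi) = real (coord_freq k) * t + real (coord_freq k) * pi"
    by (simp add: algebra_simps)
  then show ?thesis
    using odd_coord_freq[of k] by (simp add: Psi_coord_eq trig_def sin_add cos_add)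
qed

lemma Psi_coord_triple: "Psi_coord (k + 6) t = Psi_coord k (3 * t)"
  by (simp add: Psi_coord_def algebra_simps)

definition Psi_affine :: "nat \<Rightarrow> (real \<Rightarrow> real) \<Rightarrow> bool" where
  "Psi_affine m f \<longleftrightarrow> (\<exists>c \<beta>. \<forall>t. f t = \<beta> + (\<Sum>k<6 * (m + 1). c k * Psi_coord k t))"

lemma Psi_affine_const: "Psi_affine m (\<lambda>t. b)"
  unfolding Psi_affine_def by (rule exI[of _ "\<lambda>_. 0"]) simp

lemma Psi_affine_coord:
  assumes "k < 6 * (m + 1)"
  shows "Psi_affine m (Psi_coord k)"
proof -
  have "{..<6 * (m + 1)} \<inter> {i. i = k} = {k}" using assms by auto
  then show ?thesis
    unfolding Psi_affine_def by (intro exI[of _ "\<lambda>i. of_bool (i = k)"] exI[of _ 0]) simp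
qed

lemma Psi_affine_add:
  assumes "Psi_affine m f" "Psi_affine m g"
  shows "Psi_affine m (\<lambda>t. f t + g t)"
proof -
  obtain c \<beta> c' \<beta>' where
    "\<And>t. f t = \<beta> + (\<Sum>k<6 * (m + 1). c k * Psi_coord k t)"
    "\<And>t. g t = \<beta>' + (\<Sum>k<6 * (m + 1). c' k * Psi_coord k t)"
    using assms unfolding Psi_affine_def by metis
  then show ?thesis
    unfolding Psi_affine_def
    by (intro exI[of _ "\<lambda>k. c k + c' k"] exI[of _ "\<beta> + \<beta>'"]) (simp add: algebra_simps sum.distrib)
qed

lemma Psi_affine_cmult:
  assumes "Psi_affine m f"
  shows "Psi_affine m (\<lambda>t. a * f t)"
proof -
  obtain c \<beta> where "\<And>t. f t = \<beta> + (\<Sum>k<6 * (m + 1). c k * Psi_coord k t)"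
    using assms unfolding Psi_affine_def by metis
  then show ?thesis
    unfolding Psi_affine_def
    by (intro exI[of _ "\<lambda>k. a * c k"] exI[of _ "a * \<beta>"]) (simp add: algebra_simps sum_distrib_left)
qed

lemma Psi_affine_diff:
  "Psi_affine m f \<Longrightarrow> Psi_affine m g \<Longrightarrow> Psi_affine m (\<lambda>t. f t - g t)"
  using Psi_affine_add[OF _ Psi_affine_cmult[of m g "-1"]] by simp

lemma Psi_affine_harmonics:
  "Psi_affine m (\<lambda>t. cos (t - c))" "Psi_affine m (\<lambda>t. sin (t - c))"
  "Psi_affine m (\<lambda>t. cos (3 * (t - c)))" "Psi_affine m (\<lambda>t. sin (3 * (t - c)))"
  "Psi_affine m (\<lambda>t. cos (5 * (t - c)))" "Psi_affine m (\<lambda>t. sin (5 * (t - c)))"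
proof -
  have *: "Psi_affine m (\<lambda>t. a * Psi_coord k t + b * Psi_coord (k + 1) t)" if "k \<le> 4" for a b k
    using that by (intro Psi_affine_add Psi_affine_cmult Psi_affine_coord) simp_all
  show "Psi_affine m (\<lambda>t. cos (t - c))" "Psi_affine m (\<lambda>t. sin (t - c))"
    using *[of 0 "cos c" "sin c"] *[of 0 "- sin c" "cos c"]
    by (simp_all add: Psi_coord_def U3_coord_def cos_diff sin_diff algebra_simps)
  show "Psi_affine m (\<lambda>t. cos (3 * (t - c)))" "Psi_affine m (\<lambda>t. sin (3 * (t - c)))"
    using *[of 2 "cos (3 * c)" "sin (3 * c)"] *[of 2 "- sin (3 * c)" "cos (3 * c)"]
    by (simp_all add: Psi_coord_def U3_coord_def cos_diff sin_diff algebra_simps)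
  show "Psi_affine m (\<lambda>t. cos (5 * (t - c)))" "Psi_affine m (\<lambda>t. sin (5 * (t - c)))"
    using *[of 4 "cos (5 * c)" "sin (5 * c)"] *[of 4 "- sin (5 * c)" "cos (5 * c)"]
    by (simp_all add: Psi_coord_def U3_coord_def cos_diff sin_diff algebra_simps)
qed

lemmas Psi_affine_intros =
  Psi_affine_const Psi_affine_add Psi_affine_diff Psi_affine_cmult Psi_affine_harmonics

lemma Psi_affine_periodic: "Psi_affine m f \<Longrightarrow> f (t + 2 * pi * of_int n) = f t"
  unfolding Psi_affine_def by (auto simp: Psi_coord_add_2pi_int)

lemma Psi_affine_triple:
  assumes "Psi_affine m f"
  shows "Psi_affine (Suc m) (\<lambda>t. f (3 * t))"
proof -
  obtain c \<beta> where f: "\<And>t. f t = \<beta> + (\<Sum>k<6 * (m + 1). c k * Psi_coord k t)"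
    using assms unfolding Psi_affine_def by metis
  define c' where "c' k = (if k < 6 then 0 else c (k - 6))" for k
  have "(\<Sum>k<6 * (Suc m + 1). c' k * Psi_coord k t) = (\<Sum>k\<in>{0 + 6..<6 * (m + 1) + 6}. c' k * Psi_coord k t)"
    for t by (rule sum.mono_neutral_right) (auto simp: c'_def)
  also have "\<dots> t = (\<Sum>k<6 * (m + 1). c k * Psi_coord k (3 * t))" for t
    by (subst sum.shift_bounds_nat_ivl) (simp add: c'_def Psi_coord_triple atLeast0LessThan)
  finally show ?thesis
    unfolding Psi_affine_def by (intro exI[of _ c'] exI[of _ \<beta>]) (simp add: f)
qed

lemma Psi_affine_inner:
  fixes idx :: "'n::finite \<Rightarrow> nat"
  assumes "bij_betw idx UNIV {..<6 * (m + 1)}" "Psi_affine m f"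
  obtains a \<beta> where "\<And>t. f t = \<beta> + a \<bullet> Psi idx t"
proof -
  obtain c \<beta> where f: "\<And>t. f t = \<beta> + (\<Sum>k<6 * (m + 1). c k * Psi_coord k t)"
    using assms(2) unfolding Psi_affine_def by metis
  have "(\<chi> i. c (idx i)) \<bullet> Psi idx t = (\<Sum>k<6 * (m + 1). c k * Psi_coord k t)" for t
    unfolding inner_vec_def Psi_def
    using sum.reindex_bij_betw[OF assms(1), of "\<lambda>k. c k * Psi_coord k t"] by simp
  then show ?thesis using f that by metis
qed

section \<open>The grid \<open>A_set m\<close>\<close>

definition grid_size :: "nat \<Rightarrow> int" where
  "grid_size m = 4 * 3 ^ Suc m"

definition grid_pt :: "nat \<Rightarrow> int \<Rightarrow> real" where
  "grid_pt m j = 2 * pi * of_int j / of_int (grid_size m)"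

lemma grid_size_pos: "0 < grid_size m"
  by (simp add: grid_size_def)

lemma grid_size_Suc: "grid_size (Suc m) = 3 * grid_size m"
  by (simp add: grid_size_def)

lemma grid_pt_add: "grid_pt m (a + b) = grid_pt m a + grid_pt m b"
  by (simp add: grid_pt_def add_divide_distrib distrib_left)

lemma grid_pt_diff: "grid_pt m (a - b) = grid_pt m a - grid_pt m b"
  by (simp add: grid_pt_def diff_divide_distrib right_diff_distrib)

lemma grid_pt_mult: "grid_pt m (k * j) = of_int k * grid_pt m j"
  by (simp add: grid_pt_def)

lemma grid_pt_grid_size_mult: "grid_pt m (grid_size m * k) = 2 * pi * of_int k"
  using grid_size_pos[of m] by (simp add: grid_pt_def)

lemma grid_pt_half: "grid_pt m (grid_size m div 2) = pi"
  by (simp add: grid_pt_def grid_size_def)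

lemma triple_grid_pt_Suc: "3 * grid_pt (Suc m) j = grid_pt m j"
  by (simp add: grid_pt_def grid_size_Suc)

lemma grid_pt_inj: "grid_pt m a = grid_pt m b \<longleftrightarrow> a = b"
  using grid_size_pos[of m] by (auto simp: grid_pt_def)

lemma grid_pt_mod: "grid_pt m j = grid_pt m (j mod grid_size m) + 2 * pi * of_int (j div grid_size m)"
  by (metis grid_pt_add grid_pt_grid_size_mult mod_mult_div_eq)

lemma grid_pt_eq_2pi_int_iff: "(\<exists>n::int. grid_pt m j = 2 * pi * of_int n) \<longleftrightarrow> grid_size m dvd j"
proof
  assume "\<exists>n::int. grid_pt m j = 2 * pi * of_int n"
  then obtain n :: int where "grid_pt m j = grid_pt m (grid_size m * n)"
    by (auto simp: grid_pt_grid_size_mult)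
  then show "grid_size m dvd j" by (simp add: grid_pt_inj)
qed (auto simp: grid_pt_grid_size_mult)

lemma cos_grid_pt_eq_1_iff: "cos (grid_pt m j) = 1 \<longleftrightarrow> grid_size m dvd j"
  unfolding cos_one_2pi_int grid_pt_eq_2pi_int_iff[symmetric] by (simp add: mult.commute mult.left_commute)

lemma cos_grid_pt_eq_iff:
  "cos (grid_pt m j - grid_pt m a - grid_pt m e / 2) = cos (grid_pt m e / 2)
     \<longleftrightarrow> grid_size m dvd j - a \<or> grid_size m dvd j - a - e"
proof -
  let ?x = "grid_pt m j - grid_pt m a - grid_pt m e / 2" and ?y = "grid_pt m e / 2"
  have diff_sum: "?x - ?y = grid_pt m (j - a - e)" "?x + ?y = grid_pt m (j - a)"
    by (simp_all add: grid_pt_diff)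
  have "cos ?x = cos ?y \<longleftrightarrow> (\<exists>n::int. ?x - ?y = 2 * pi * n) \<or> (\<exists>n::int. ?x + ?y = 2 * pi * n)"
    unfolding cos_eq by (auto elim!: Ints_cases simp: algebra_simps)
  then show ?thesis
    unfolding diff_sum grid_pt_eq_2pi_int_iff by blast
qed

lemma A_set_eq: "A_set m = grid_pt m ` {0..<grid_size m}"
proof -
  have "A_set m = (\<lambda>j. grid_pt m (int j)) ` {0..<4 * 3 ^ Suc m}"
    by (auto simp: A_set_def grid_pt_def grid_size_def)
  also have "\<dots> = grid_pt m ` {0..<grid_size m}"
    by (simp add: image_image[symmetric] image_int_atLeastLessThan grid_size_def)
  finally show ?thesis .
qed

lemma finite_A_set: "finite (A_set m)"
  by (simp add: A_set_eq)

lemma card_A_set: "card (A_set m) = 4 * 3 ^ Suc m"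
  unfolding A_set_eq by (simp add: card_image inj_on_def grid_pt_inj grid_size_def nat_mult_distrib nat_power_eq)

lemma grid_pt_mod_in_A_set: "grid_pt m (j mod grid_size m) \<in> A_set m"
  using grid_size_pos[of m] by (simp add: A_set_eq)

lemma grid_index_dvd_iff:
  assumes "a \<in> {0..<grid_size m}" "b \<in> {0..<grid_size m}"
  shows "grid_size m dvd a - b \<longleftrightarrow> a = b"
  using assms by (metis atLeastLessThan_iff mod_eq_dvd_iff mod_pos_pos_trivial)

lemma Psi_add_pi: "Psi idx (t + pi) = - Psi idx t"
  by (simp add: Psi_def vec_eq_iff Psi_coord_add_pi)

lemma Psi_add_2pi_int: "Psi idx (t + 2 * pi * of_int n) = Psi idx t"
  by (simp add: Psi_def vec_eq_iff Psi_coord_add_2pi_int)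

lemma Psi_grid_pt_in_image: "Psi idx (grid_pt m j) \<in> Psi idx ` A_set m"
  using grid_pt_mod_in_A_set[of m j] by (subst grid_pt_mod) (simp add: Psi_add_2pi_int)

lemma uminus_Psi_image: "uminus ` Psi idx ` A_set m = Psi idx ` A_set m"
proof -
  have neg: "- x \<in> Psi idx ` A_set m" if x: "x \<in> Psi idx ` A_set m" for x
  proof -
    obtain a where "x = Psi idx (grid_pt m a)"
      using x unfolding A_set_eq by blast
    then have "- x = Psi idx (grid_pt m (a + grid_size m div 2))"
      by (simp add: grid_pt_add grid_pt_half Psi_add_pi)
    then show ?thesis
      using Psi_grid_pt_in_image by simp
  qed
  then have "uminus ` Psi idx ` A_set m \<subseteq> Psi idx ` A_set m"
    by blast
  moreover have "Psi idx ` A_set m \<subseteq> uminus ` Psi idx ` A_set m"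
  proof
    fix x
    assume "x \<in> Psi idx ` A_set m"
    then have "x = - (- x)" and "- x \<in> Psi idx ` A_set m"
      using neg by simp_all
    then show "x \<in> uminus ` Psi idx ` A_set m"
      by (rule image_eqI)
  qed
  ultimately show ?thesis
    by (rule antisym)
qed

lemma zero_set_in_A_set:
  assumes a: "a \<in> {0..<grid_size m}" and b: "b \<in> {0..<grid_size m}"
    and zeros: "\<And>j. f (grid_pt m j) = 0 \<longleftrightarrow> grid_size m dvd j - a \<or> grid_size m dvd j - b"
  shows "{t \<in> A_set m. f t = 0} = {grid_pt m a, grid_pt m b}"
proof -
  have "t \<in> A_set m \<and> f t = 0 \<longleftrightarrow> t = grid_pt m a \<or> t = grid_pt m b" for t
  proof
    assume "t \<in> A_set m \<and> f t = 0"
    then obtain j where j: "j \<in> {0..<grid_size m}" "t = grid_pt m j" "f (grid_pt m j) = 0"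
      unfolding A_set_eq by blast
    then have "grid_size m dvd j - a \<or> grid_size m dvd j - b"
      using zeros[of j] by simp
    then have "j = a \<or> j = b"
      using grid_index_dvd_iff[OF j(1) a] grid_index_dvd_iff[OF j(1) b] by simp
    then show "t = grid_pt m a \<or> t = grid_pt m b"
      using j by blast
  next
    assume "t = grid_pt m a \<or> t = grid_pt m b"
    moreover have "grid_pt m a \<in> A_set m" "grid_pt m b \<in> A_set m"
      using a b unfolding A_set_eq by blast+
    moreover have "f (grid_pt m a) = 0" "f (grid_pt m b) = 0"
      using zeros[of a] zeros[of b] by simp_all
    ultimately show "t \<in> A_set m \<and> f t = 0"
      by blast
  qed
  then show ?thesis
    by blast
qed

section \<open>Exposed faces cut out by nonnegative affine functions\<close>

lemma convex_hull_Int_supporting_hyperplane: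
  fixes S :: "'a::euclidean_space set"
  assumes "finite S" and le: "\<And>x. x \<in> S \<Longrightarrow> a \<bullet> x \<le> b"
  shows "convex hull S \<inter> {x. a \<bullet> x = b} = convex hull {x \<in> S. a \<bullet> x = b}"
proof
  have "convex hull S \<subseteq> {x. a \<bullet> x \<le> b}"
    using le by (intro hull_minimal convex_halfspace_le) auto
  then have "(convex hull S \<inter> {x. a \<bullet> x = b}) face_of convex hull S"
    by (intro face_of_Int_supporting_hyperplane_le) auto
  then obtain S' where S': "S' \<subseteq> S" "convex hull S \<inter> {x. a \<bullet> x = b} = convex hull S'"
    using face_of_convex_hull_subset finite_imp_compact[OF \<open>finite S\<close>] by metis
  then have "S' \<subseteq> {x \<in> S. a \<bullet> x = b}"
    using hull_subset[of S' convex] by blast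
  then show "convex hull S \<inter> {x. a \<bullet> x = b} \<subseteq> convex hull {x \<in> S. a \<bullet> x = b}"
    unfolding S'(2) by (rule hull_mono)
  show "convex hull {x \<in> S. a \<bullet> x = b} \<subseteq> convex hull S \<inter> {x. a \<bullet> x = b}"
    by (intro Int_greatest hull_mono hull_minimal convex_hyperplane) auto
qed

lemma Psi_affine_exposed_face:
  fixes idx :: "'n::finite \<Rightarrow> nat"
  assumes "bij_betw idx UNIV {..<6 * (m + 1)}" "Psi_affine m f"
    and nonneg: "\<And>t. t \<in> A_set m \<Longrightarrow> 0 \<le> f t"
  shows "convex hull (Psi idx ` {t \<in> A_set m. f t = 0}) exposed_face_of convex hull (Psi idx ` A_set m)"
proof -
  obtain a \<beta> where f: "\<And>t. f t = \<beta> + a \<bullet> Psi idx t"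
    using Psi_affine_inner[OF assms(1,2)] by metis
  let ?S = "Psi idx ` A_set m"
  have le: "(- a) \<bullet> x \<le> \<beta>" if x: "x \<in> ?S" for x
  proof -
    obtain t where "t \<in> A_set m" "x = Psi idx t"
      using x by blast
    then show ?thesis
      using nonneg[of t] f[of t] by simp
  qed
  have "convex hull ?S \<subseteq> {x. (- a) \<bullet> x \<le> \<beta>}"
    using le by (intro hull_minimal convex_halfspace_le) auto
  then have "convex hull ?S \<inter> {x. (- a) \<bullet> x = \<beta>} exposed_face_of convex hull ?S"
    by (intro exposed_face_of_Int_supporting_hyperplane_le convex_convex_hull) auto
  also have "convex hull ?S \<inter> {x. (- a) \<bullet> x = \<beta>} = convex hull {x \<in> ?S. (- a) \<bullet> x = \<beta>}"
    using le finite_A_set by (intro convex_hull_Int_supporting_hyperplane) auto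
  also have "{x \<in> ?S. (- a) \<bullet> x = \<beta>} = Psi idx ` {t \<in> A_set m. f t = 0}"
    by (auto simp: f)
  finally show ?thesis .
qed

lemma convex_hull_symmetric:
  fixes S :: "'a::real_vector set"
  assumes "uminus ` S = S"
  shows "uminus ` (convex hull S) = convex hull S"
  using convex_hull_scaling[of "-1" S] assms by simp

lemma aff_dim_symmetric:
  fixes S :: "'a::euclidean_space set"
  assumes "uminus ` S = S" "x \<in> S"
  shows "aff_dim S = int (dim S)"
proof -
  have "- x \<in> S"
    using assms by blast
  have "0 = midpoint x (- x)"
    by (simp add: midpoint_def)
  also have "midpoint x (- x) \<in> convex hull S"
    using midpoint_in_closed_segment[of x "- x"] hull_mono[of "{x, - x}" S] \<open>- x \<in> S\<close> assms(2)
    by (auto simp: segment_convex_hull)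
  also have "convex hull S \<subseteq> affine hull S"
    by (rule convex_hull_subset_affine_hull)
  finally show ?thesis
    by (rule aff_dim_zero)
qed

section \<open>Certificates for the edges\<close>

text \<open>With \<open>d = grid_size m\<close>, \<open>f\<close> vanishes on the grid exactly at two vertices; with
  \<open>d = grid_size m div 3\<close>, exactly on their orbits under rotation by \<open>2 pi/3\<close>.\<close>

definition coset_certificate :: "nat \<Rightarrow> int \<Rightarrow> int \<Rightarrow> int \<Rightarrow> (real \<Rightarrow> real) \<Rightarrow> bool" where
  "coset_certificate m d a b f \<longleftrightarrow> Psi_affine m f \<and>
     (\<forall>j. 0 \<le> f (grid_pt m j) \<and> (f (grid_pt m j) = 0 \<longleftrightarrow> d dvd j - a \<or> d dvd j - b))"

lemma coset_certificate_swap: "coset_certificate m d a b f \<Longrightarrow> coset_certificate m d b a f"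
  by (auto simp: coset_certificate_def)

lemma coset_certificate_cong:
  assumes "coset_certificate m d a b f" "d dvd a - a'" "d dvd b - b'"
  shows "coset_certificate m d a' b' f"
  using assms by (simp add: coset_certificate_def flip: mod_eq_dvd_iff)

lemma coset_certificate_triple:
  "coset_certificate m d a b f \<Longrightarrow> coset_certificate (Suc m) d a b (\<lambda>t. f (3 * t))"
  by (simp add: coset_certificate_def Psi_affine_triple triple_grid_pt_Suc)

lemma nonneg_perturbation:
  fixes g h :: "'a \<Rightarrow> real"
  assumes fin: "finite (range (\<lambda>x. (g x, h x)))"
    and g: "\<And>x. 0 \<le> g x" and h: "\<And>x. g x = 0 \<Longrightarrow> 0 \<le> h x"
  obtains \<epsilon> where "0 < \<epsilon>" "\<And>x. 0 \<le> g x + \<epsilon> * h x \<and> (g x + \<epsilon> * h x = 0 \<longleftrightarrow> g x = 0 \<and> h x = 0)"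
proof -
  define V where "V = (\<lambda>(u, v). u / (\<bar>v\<bar> + 1)) ` (range (\<lambda>x. (g x, h x)) \<inter> {(u, v). 0 < u})"
  define \<epsilon> where "\<epsilon> = Min (insert 1 V)"
  have "finite V"
    using fin by (simp add: V_def)
  have "0 < \<epsilon>"
    using \<open>finite V\<close> by (auto simp: \<epsilon>_def V_def add_nonneg_pos)
  have bound: "\<epsilon> * \<bar>h x\<bar> < g x" if "0 < g x" for x
  proof -
    have "\<epsilon> \<le> g x / (\<bar>h x\<bar> + 1)"
      unfolding \<epsilon>_def using \<open>finite V\<close> that by (intro Min_le) (auto simp: V_def)
    then have "\<epsilon> * (\<bar>h x\<bar> + 1) \<le> g x"
      by (simp add: le_divide_eq add_nonneg_pos)
    then show ?thesis
      using \<open>0 < \<epsilon>\<close> by (simp add: algebra_simps)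
  qed
  show ?thesis
  proof (rule that[OF \<open>0 < \<epsilon>\<close>])
    fix x
    show "0 \<le> g x + \<epsilon> * h x \<and> (g x + \<epsilon> * h x = 0 \<longleftrightarrow> g x = 0 \<and> h x = 0)"
    proof (cases "g x = 0")
      case True
      then show ?thesis
        using h[of x] \<open>0 < \<epsilon>\<close> by simp
    next
      case False
      then have "0 < g x"
        using g[of x] by simp
      moreover have "- (\<epsilon> * \<bar>h x\<bar>) \<le> \<epsilon> * h x"
        using abs_ge_minus_self[of "\<epsilon> * h x"] \<open>0 < \<epsilon>\<close> by (simp add: abs_mult)
      ultimately have "0 < g x + \<epsilon> * h x"
        using bound by fastforce
      then show ?thesis
        using False by simp
    qed
  qed
qed

lemma coset_certificate_perturb:
  assumes "Psi_affine m g" "Psi_affine m h"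
    and g_nonneg: "\<And>j. 0 \<le> g (grid_pt m j)"
    and h_nonneg: "\<And>j. g (grid_pt m j) = 0 \<Longrightarrow> 0 \<le> h (grid_pt m j)"
    and zeros: "\<And>j. g (grid_pt m j) = 0 \<and> h (grid_pt m j) = 0 \<longleftrightarrow> d dvd j - a \<or> d dvd j - b"
  shows "\<exists>f. coset_certificate m d a b f"
proof -
  let ?v = "\<lambda>j. (g (grid_pt m j), h (grid_pt m j))"
  have periodic: "?v j = ?v (j mod grid_size m)" for j
    using Psi_affine_periodic[OF assms(1)] Psi_affine_periodic[OF assms(2)]
    by (simp only: grid_pt_mod[of m j])
  have "range ?v \<subseteq> ?v ` {0..<grid_size m}"
  proof (rule image_subsetI)
    fix j
    have "j mod grid_size m \<in> {0..<grid_size m}"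
      using grid_size_pos[of m] by simp
    then show "?v j \<in> ?v ` {0..<grid_size m}"
      unfolding periodic[of j] by (rule imageI)
  qed
  then have "finite (range ?v)"
    by (rule finite_subset) simp
  then obtain \<epsilon> where \<epsilon>: "\<And>j. 0 \<le> g (grid_pt m j) + \<epsilon> * h (grid_pt m j) \<and>
      (g (grid_pt m j) + \<epsilon> * h (grid_pt m j) = 0 \<longleftrightarrow> g (grid_pt m j) = 0 \<and> h (grid_pt m j) = 0)"
    using nonneg_perturbation[of "\<lambda>j. g (grid_pt m j)" "\<lambda>j. h (grid_pt m j)"] g_nonneg h_nonneg by metis
  have "coset_certificate m d a b (\<lambda>t. g t + \<epsilon> * h t)"
    unfolding coset_certificate_def using \<epsilon> zeros assms(1,2) by (simp add: Psi_affine_add Psi_affine_cmult)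
  then show ?thesis by blast
qed

lemma cubic_cos_factor:
  fixes x y :: real
  shows "cos (3 * x) + (3 - 12 * y\<^sup>2) * cos x + 8 * y ^ 3 = 4 * (cos x - y)\<^sup>2 * (cos x + 2 * y)"
  unfolding cos_treble_cos by (simp add: power2_eq_square power3_eq_cube algebra_simps)

lemma edge_certificate_short_gap:
  assumes "0 < e" "3 * e < grid_size m"
  shows "\<exists>f. coset_certificate m (grid_size m) a (a + e) f"
proof -
  define \<delta> where "\<delta> = grid_pt m e / 2"
  define c where "c = grid_pt m a + \<delta>"
  define y where "y = cos \<delta>"
  define f where "f t = cos (3 * (t - c)) + (3 - 12 * y\<^sup>2) * cos (t - c) + 8 * y ^ 3" for t
  have "0 < \<delta>" "\<delta> < pi / 3"
    using assms grid_size_pos[of m] by (simp_all add: \<delta>_def grid_pt_def field_simps)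
  then have "1 / 2 < y"
    unfolding y_def using cos_monotone_0_pi[of \<delta> "pi / 3"] by (simp add: cos_60)
  then have pos: "0 < cos (t - c) + 2 * y" for t
    using cos_ge_minus_one[of "t - c"] by linarith
  have "coset_certificate m (grid_size m) a (a + e) f"
    unfolding coset_certificate_def
  proof (intro conjI allI)
    show "Psi_affine m f"
      unfolding f_def by (intro Psi_affine_intros)
    show "0 \<le> f (grid_pt m j)" for j
      using pos[of "grid_pt m j"] unfolding f_def cubic_cos_factor by simp
    have "f t = 0 \<longleftrightarrow> cos (t - c) = y" for t
      using pos[of t] unfolding f_def cubic_cos_factor by simp
    then show "f (grid_pt m j) = 0 \<longleftrightarrow> grid_size m dvd j - a \<or> grid_size m dvd j - (a + e)" for j
      using cos_grid_pt_eq_iff[of m j a e] by (simp add: c_def y_def \<delta>_def diff_diff_eq)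
  qed
  then show ?thesis by blast
qed

lemma cos_triple_eq_minus_one:
  fixes x :: real
  assumes "cos (3 * x) = -1"
  shows "cos x = -1 \<or> cos x = 1 / 2"
proof -
  have "(cos x + 1) * (2 * cos x - 1)\<^sup>2 = 0"
    using assms unfolding cos_treble_cos by (simp add: power2_eq_square power3_eq_cube algebra_simps)
  then show ?thesis by auto
qed

lemma edge_certificate_third_gap:
  assumes "3 * e = grid_size m"
  shows "\<exists>f. coset_certificate m (grid_size m) a (a + e) f"
proof (rule coset_certificate_perturb[where g = "\<lambda>t. 1 - cos (3 * (t - grid_pt m a))"
      and h = "\<lambda>t. 1 / 2 - cos (t - (grid_pt m a + pi / 3))"])
  let ?N = "grid_size m"
  have third: "grid_pt m e / 2 = pi / 3"
    using assms grid_size_pos[of m] by (simp add: grid_pt_def field_simps)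
  have g_zero: "1 - cos (3 * (grid_pt m j - grid_pt m a)) = 0 \<longleftrightarrow> ?N dvd 3 * (j - a)" for j
    using cos_grid_pt_eq_1_iff[of m "3 * (j - a)"] by (simp only: grid_pt_mult grid_pt_diff) simp
  have h_zero: "1 / 2 - cos (grid_pt m j - (grid_pt m a + pi / 3)) = 0 \<longleftrightarrow> ?N dvd j - a \<or> ?N dvd j - a - e" for j
    using cos_grid_pt_eq_iff[of m j a e] by (simp add: third cos_60 diff_diff_eq)
  show "Psi_affine m (\<lambda>t. 1 - cos (3 * (t - grid_pt m a)))"
    "Psi_affine m (\<lambda>t. 1 / 2 - cos (t - (grid_pt m a + pi / 3)))"
    by (intro Psi_affine_intros)+
  show "0 \<le> 1 - cos (3 * (grid_pt m j - grid_pt m a))" for j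
    by simp
  show "0 \<le> 1 / 2 - cos (grid_pt m j - (grid_pt m a + pi / 3))"
    if "1 - cos (3 * (grid_pt m j - grid_pt m a)) = 0" for j
  proof -
    have "3 * (grid_pt m j - (grid_pt m a + pi / 3)) = 3 * (grid_pt m j - grid_pt m a) - pi"
      by (simp add: algebra_simps)
    then have "cos (3 * (grid_pt m j - (grid_pt m a + pi / 3))) = -1"
      using that by (simp add: cos_diff)
    then have "cos (grid_pt m j - (grid_pt m a + pi / 3)) \<in> {-1, 1 / 2}"
      using cos_triple_eq_minus_one by simp
    then show ?thesis
      by auto
  qed
  show "(1 - cos (3 * (grid_pt m j - grid_pt m a)) = 0 \<and> 1 / 2 - cos (grid_pt m j - (grid_pt m a + pi / 3)) = 0)
      \<longleftrightarrow> ?N dvd j - a \<or> ?N dvd j - (a + e)" for j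
  proof -
    have "?N dvd 3 * (j - a)" if "?N dvd j - a \<or> ?N dvd j - a - e"
    proof -
      have "3 * (j - a) = 3 * (j - a - e) + ?N"
        using assms by simp
      then show ?thesis
        using that by (metis dvd_add dvd_mult dvd_refl)
    qed
    then show ?thesis
      using g_zero h_zero by (auto simp: diff_diff_eq)
  qed
qed

lemma cos_correction_identity:
  fixes u \<delta> :: real
  assumes "cos (3 * u) = 1"
  shows "sin (6 * \<delta>) - sin (5 * \<delta>) * cos (u - \<delta>) - sin \<delta> * cos (5 * (u - \<delta>))
    = sin (6 * \<delta>) * (1 - cos u)"
proof -
  obtain n :: int where "3 * u = of_int n * 2 * pi"
    using assms cos_one_2pi_int by blast
  then have "5 * (u - \<delta>) = - (u + 5 * \<delta>) + 2 * pi * of_int (2 * n)"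
    by (simp add: algebra_simps)
  then have "cos (5 * (u - \<delta>)) = cos (- (u + 5 * \<delta>) + 2 * pi * of_int (2 * n))"
    by (simp only:)
  also have "\<dots> = cos (- (u + 5 * \<delta>))"
    by (simp only: cos_add cos_int_2pin sin_int_2pin)
  also have "\<dots> = cos (u + 5 * \<delta>)"
    by (rule cos_minus)
  finally have cos5: "cos (5 * (u - \<delta>)) = cos (u + 5 * \<delta>)" .
  have sin6: "sin (6 * \<delta>) = sin (5 * \<delta>) * cos \<delta> + cos (5 * \<delta>) * sin \<delta>"
    using sin_add[of "5 * \<delta>" \<delta>] by simp
  show ?thesis
    unfolding cos5 sin6 cos_add cos_diff by (simp add: algebra_simps)
qed

lemma sin_triple_grid_pt_pos:
  assumes "grid_size m < 3 * e" "2 * e < grid_size m"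
  shows "0 < sin (3 * grid_pt m e)"
proof -
  have "3 * grid_pt m e = grid_pt m (3 * e - grid_size m) + 2 * pi"
    using grid_size_pos[of m] by (simp add: grid_pt_def field_simps)
  moreover have "0 < grid_pt m (3 * e - grid_size m)" "grid_pt m (3 * e - grid_size m) < pi"
    using assms grid_size_pos[of m] by (simp_all add: grid_pt_def field_simps)
  ultimately show ?thesis
    by (simp add: sin_gt_zero)
qed

text \<open>On the two orbits where \<open>g\<close> vanishes, the correction \<open>h\<close> equals \<open>sin (6\<delta>) (1 - cos u)\<close>,
  with \<open>u\<close> the angle to \<open>a\<close> resp. \<open>a + e\<close> (by \<open>cos_correction_identity\<close>), and \<open>sin (6\<delta>) > 0\<close>
  because \<open>pi/3 < \<delta> < pi/2\<close>.\<close>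

lemma edge_certificate_long_gap:
  assumes "grid_size m < 3 * e" "2 * e < grid_size m"
    and g: "coset_certificate m (grid_size m div 3) a (a + e) g"
  shows "\<exists>f. coset_certificate m (grid_size m) a (a + e) f"
proof -
  define N where "N = grid_size m"
  define M where "M = N div 3"
  have N: "N = 3 * M"
    by (simp add: N_def M_def grid_size_def)
  define \<delta> where "\<delta> = grid_pt m e / 2"
  define c where "c = grid_pt m a + \<delta>"
  define h where "h t = sin (6 * \<delta>) - sin (5 * \<delta>) * cos (t - c) - sin \<delta> * cos (5 * (t - c))" for t
  have "0 < sin (6 * \<delta>)"
    using sin_triple_grid_pt_pos[OF assms(1,2)] by (simp add: \<delta>_def)
  have cos_triple: "cos (3 * grid_pt m x) = 1" if "M dvd x" for x
    using that cos_grid_pt_eq_1_iff[of m "3 * x"] by (simp add: grid_pt_mult N_def[symmetric] N)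
  have h_at_a: "h (grid_pt m j) = sin (6 * \<delta>) * (1 - cos (grid_pt m (j - a)))" if "M dvd j - a" for j
    using cos_correction_identity[OF cos_triple[OF that], of \<delta>]
    by (simp add: h_def c_def grid_pt_diff diff_diff_eq)
  have h_at_b: "h (grid_pt m j) = sin (6 * \<delta>) * (1 - cos (grid_pt m (j - (a + e))))" if "M dvd j - (a + e)" for j
  proof -
    have "grid_pt m (j - (a + e)) - - \<delta> = grid_pt m j - c"
      by (simp add: c_def \<delta>_def grid_pt_diff grid_pt_add)
    then show ?thesis
      using cos_correction_identity[OF cos_triple[OF that], of "- \<delta>"] by (simp add: h_def)
  qed
  show ?thesis
  proof (rule coset_certificate_perturb[where g = g and h = h])
    show "Psi_affine m g"
      using g by (simp add: coset_certificate_def)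
    show "Psi_affine m h"
      unfolding h_def by (intro Psi_affine_intros)
    show "0 \<le> g (grid_pt m j)" for j
      using g by (simp add: coset_certificate_def)
    have g_zero: "g (grid_pt m j) = 0 \<longleftrightarrow> M dvd j - a \<or> M dvd j - (a + e)" for j
      using g by (simp add: coset_certificate_def M_def N_def)
    show "0 \<le> h (grid_pt m j)" if "g (grid_pt m j) = 0" for j
      using that g_zero h_at_a h_at_b \<open>0 < sin (6 * \<delta>)\<close> by auto
    have "M dvd N"
      using N by simp
    then show "g (grid_pt m j) = 0 \<and> h (grid_pt m j) = 0 \<longleftrightarrow> grid_size m dvd j - a \<or> grid_size m dvd j - (a + e)"
      for j
      using g_zero h_at_a h_at_b \<open>0 < sin (6 * \<delta>)\<close>
      by (auto simp: cos_grid_pt_eq_1_iff N_def[symmetric] intro: dvd_trans)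
  qed
qed

lemma coset_certificate_level0:
  "coset_certificate 0 4 a (a + 1) (\<lambda>t. 1 - cos (3 * (t - grid_pt 0 a)) - sin (3 * (t - grid_pt 0 a)))"
  unfolding coset_certificate_def
proof (intro conjI allI)
  show "Psi_affine 0 (\<lambda>t. 1 - cos (3 * (t - grid_pt 0 a)) - sin (3 * (t - grid_pt 0 a)))"
    by (intro Psi_affine_intros)
  fix j
  define w where "w = grid_pt 0 (3 * (j - a))"
  have w: "3 * (grid_pt 0 j - grid_pt 0 a) = w"
    by (simp add: w_def grid_pt_mult grid_pt_diff)
  have "sin w * cos w = 0"
  proof -
    have "2 * w = pi * of_int (j - a)"
      by (simp add: w_def grid_pt_def grid_size_def)
    then have "sin (2 * w) = 0"
      by (simp only: sin_npi_int)
    then show ?thesis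
      by (simp add: sin_double)
  qed
  then have factor: "1 - cos w - sin w = (1 - cos w) * (1 - sin w)"
    by (simp add: algebra_simps)
  have twelve: "12 dvd 3 * x \<longleftrightarrow> 4 dvd x" for x :: int
    by presburger
  have "cos w = 1 \<longleftrightarrow> 4 dvd j - a"
    using cos_grid_pt_eq_1_iff[of 0 "3 * (j - a)"] twelve[of "j - a"] by (simp add: w_def grid_size_def)
  moreover have "sin w = 1 \<longleftrightarrow> 4 dvd j - (a + 1)"
  proof -
    have "sin w = cos (w - pi / 2)"
      by (simp add: cos_diff)
    also have "w - pi / 2 = grid_pt 0 (3 * (j - (a + 1)))"
      by (simp add: w_def grid_pt_def grid_size_def field_simps)
    finally have "sin w = cos (grid_pt 0 (3 * (j - (a + 1))))" .
    then show ?thesis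
      using cos_grid_pt_eq_1_iff[of 0 "3 * (j - (a + 1))"] twelve[of "j - (a + 1)"] by (simp add: grid_size_def)
  qed
  ultimately show "0 \<le> 1 - cos (3 * (grid_pt 0 j - grid_pt 0 a)) - sin (3 * (grid_pt 0 j - grid_pt 0 a))"
    "1 - cos (3 * (grid_pt 0 j - grid_pt 0 a)) - sin (3 * (grid_pt 0 j - grid_pt 0 a)) = 0
      \<longleftrightarrow> 4 dvd j - a \<or> 4 dvd j - (a + 1)"
    unfolding w factor by auto
qed

lemma not_dvd_between:
  fixes n x k :: int
  assumes "k * n < x" "x < (k + 1) * n"
  shows "\<not> n dvd x"
proof
  assume "n dvd x"
  then obtain q where "x = q * n"
    by (metis dvdE mult.commute)
  moreover have "0 < n"
    using assms by (simp add: algebra_simps)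
  ultimately show False
    using assms by (simp add: mult_less_cancel_right)
qed

lemma edge_certificate_of_gap:
  assumes cosets: "\<And>e. grid_size m < 3 * e \<Longrightarrow> 2 * e < grid_size m
      \<Longrightarrow> \<exists>g. coset_certificate m (grid_size m div 3) a (a + e) g"
    and "0 < e" "2 * e < grid_size m"
  shows "\<exists>f. coset_certificate m (grid_size m) a (a + e) f"
proof -
  consider "3 * e < grid_size m" | "3 * e = grid_size m" | "grid_size m < 3 * e"
    by linarith
  then show ?thesis
  proof cases
    case 1
    then show ?thesis using edge_certificate_short_gap \<open>0 < e\<close> by blast
  next
    case 2
    then show ?thesis using edge_certificate_third_gap by blast
  next
    case 3
    then show ?thesis using edge_certificate_long_gap cosets \<open>2 * e < grid_size m\<close> by blast
  qed
qed

lemma shorter_arc: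
  fixes N a b :: int
  assumes N: "0 < N" "even N" and ab: "\<not> N dvd a - b" and antipodal: "\<not> N dvd a - b - N div 2"
  obtains e where "0 < e" "2 * e < N" "N dvd a + e - b"
    | e where "0 < e" "2 * e < N" "N dvd b + e - a"
proof -
  define e where "e = (b - a) mod N"
  have "N dvd b - a - e"
    by (simp add: e_def flip: mod_eq_dvd_iff)
  then obtain k where k: "b - a - e = N * k" ..
  have e: "0 \<le> e" "e < N"
    using N(1) by (simp_all add: e_def)
  have "e \<noteq> 0"
  proof
    assume "e = 0"
    then have "a - b = N * - k"
      using k by simp
    then show False
      using ab by simp
  qed
  have "e \<noteq> N div 2"
  proof
    assume "e = N div 2"
    then have "a - b - N div 2 = N * (- k - 1)"
      using k N(2) by (simp add: algebra_simps)
    then show False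
      using antipodal by simp
  qed
  have "a + e - b = N * - k" "b + (N - e) - a = N * (k + 1)"
    using k by (simp_all add: algebra_simps)
  then have "N dvd a + e - b" "N dvd b + (N - e) - a"
    by (metis dvdI)+
  moreover have "0 < e \<and> 2 * e < N \<or> 0 < N - e \<and> 2 * (N - e) < N"
    using e N \<open>e \<noteq> 0\<close> \<open>e \<noteq> N div 2\<close> by presburger
  ultimately show ?thesis
    using that by blast
qed

lemma edge_certificate_of_cosets:
  assumes cosets: "\<And>a e. grid_size m < 3 * e \<Longrightarrow> 2 * e < grid_size m
      \<Longrightarrow> \<exists>g. coset_certificate m (grid_size m div 3) a (a + e) g"
    and "\<not> grid_size m dvd a - b" "\<not> grid_size m dvd a - b - grid_size m div 2"
  shows "\<exists>f. coset_certificate m (grid_size m) a b f"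
proof -
  have "0 < grid_size m" "even (grid_size m)"
    by (simp_all add: grid_size_pos grid_size_def)
  then show ?thesis
  proof (rule shorter_arc)
    fix e
    assume "0 < e" "2 * e < grid_size m" and dvd: "grid_size m dvd a + e - b"
    then obtain f where "coset_certificate m (grid_size m) a (a + e) f"
      using edge_certificate_of_gap[OF cosets] by blast
    then have "coset_certificate m (grid_size m) a b f"
      by (rule coset_certificate_cong) (simp_all add: dvd)
    then show ?thesis
      by blast
  next
    fix e
    assume "0 < e" "2 * e < grid_size m" and dvd: "grid_size m dvd b + e - a"
    then obtain f where "coset_certificate m (grid_size m) b (b + e) f"
      using edge_certificate_of_gap[OF cosets] by blast
    then have "coset_certificate m (grid_size m) b a f"
      by (rule coset_certificate_cong) (simp_all add: dvd)
    then show ?thesis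
      using coset_certificate_swap by blast
  qed (use assms in auto)
qed

lemma edge_certificate:
  assumes "\<not> grid_size m dvd a - b" "\<not> grid_size m dvd a - b - grid_size m div 2"
  shows "\<exists>f. coset_certificate m (grid_size m) a b f"
  using assms
proof (induction m arbitrary: a b)
  case 0
  have "\<exists>g. coset_certificate 0 (grid_size 0 div 3) a (a + e) g"
    if "grid_size 0 < 3 * e" "2 * e < grid_size 0" for a e
  proof -
    have "e = 5" "grid_size 0 div 3 = 4"
      using that by (simp_all add: grid_size_def)
    then show ?thesis
      using coset_certificate_cong[OF coset_certificate_level0[of a], of a "a + e"] by auto
  qed
  then show ?case
    using "0.prems" by (rule edge_certificate_of_cosets)
next
  case (Suc m)
  have "\<exists>g. coset_certificate (Suc m) (grid_size (Suc m) div 3) a (a + e) g"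
    if "grid_size (Suc m) < 3 * e" "2 * e < grid_size (Suc m)" for a e
  proof -
    let ?N = "grid_size m"
    have N: "?N = 2 * (?N div 2)"
      by (simp add: grid_size_def)
    have "1 * ?N < e" "e < (1 + 1) * ?N" "1 * ?N < e + ?N div 2" "e + ?N div 2 < (1 + 1) * ?N"
      using that N by (simp_all add: grid_size_Suc)
    then have "\<not> ?N dvd e" "\<not> ?N dvd e + ?N div 2"
      using not_dvd_between[of 1 ?N] by blast+
    moreover have "a - (a + e) = - e" "a - (a + e) - ?N div 2 = - (e + ?N div 2)"
      by simp_all
    ultimately have "\<not> ?N dvd a - (a + e)" "\<not> ?N dvd a - (a + e) - ?N div 2"
      by (simp_all only: dvd_minus_iff) simp_all
    then obtain f where "coset_certificate m ?N a (a + e) f"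
      using Suc.IH by blast
    then have "coset_certificate (Suc m) ?N a (a + e) (\<lambda>t. f (3 * t))"
      by (rule coset_certificate_triple)
    then show ?thesis
      by (auto simp: grid_size_Suc)
  qed
  then show ?case
    using Suc.prems by (rule edge_certificate_of_cosets)
qed

section \<open>Discrete orthogonality and the dimension\<close>

lemma cis_root_eq_1_iff:
  fixes N :: nat and k :: int
  assumes "0 < N"
  shows "cis (2 * pi * of_int k / real N) = 1 \<longleftrightarrow> int N dvd k"
proof -
  have "cis x = 1 \<longleftrightarrow> cos x = 1" for x
  proof -
    have "cos x = 1 \<Longrightarrow> sin x = 0"
      using sin_cos_squared_add[of x] by simp
    then show ?thesis
      by (auto simp: complex_eq_iff)
  qed
  moreover have "2 * pi * of_int k / real N = of_int n * 2 * pi \<longleftrightarrow> k = n * int N" for n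
  proof -
    have "2 * pi * of_int k / real N = of_int n * 2 * pi \<longleftrightarrow> of_int k = of_int n * real N"
      using assms by (auto simp: field_simps)
    also have "\<dots> \<longleftrightarrow> k = n * int N"
      by (metis of_int_eq_iff of_int_mult of_int_of_nat_eq)
    finally show ?thesis .
  qed
  then have "cos (2 * pi * of_int k / real N) = 1 \<longleftrightarrow> (\<exists>n::int. k = n * int N)"
    by (simp add: cos_one_2pi_int)
  ultimately show ?thesis
    by (auto simp: dvd_def mult.commute)
qed

lemma sum_cis_roots:
  fixes N :: nat and k :: int
  assumes "0 < N"
  shows "(\<Sum>j<N. cis (real j * (2 * pi * of_int k / real N))) = (if int N dvd k then of_nat N else 0)"
proof -
  define \<omega> where "\<omega> = cis (2 * pi * of_int k / real N)"
  have powers: "cis (real j * (2 * pi * of_int k / real N)) = \<omega> ^ j" for j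
    by (simp only: \<omega>_def Complex.DeMoivre)
  have "real N * (2 * pi * of_int k / real N) = 2 * pi * of_int k"
    using assms by simp
  then have "\<omega> ^ N = 1"
    by (simp only: \<omega>_def Complex.DeMoivre) simp
  moreover have "\<omega> = 1 \<longleftrightarrow> int N dvd k"
    unfolding \<omega>_def by (rule cis_root_eq_1_iff[OF assms])
  ultimately show ?thesis
    unfolding powers by (auto simp: geometric_sum)
qed

lemma sum_cos_sin_roots:
  fixes N :: nat and k :: int
  assumes "0 < N"
  shows "(\<Sum>j<N. cos (real j * (2 * pi * of_int k / real N))) = (if int N dvd k then real N else 0)"
    and "(\<Sum>j<N. sin (real j * (2 * pi * of_int k / real N))) = 0"
proof -
  let ?S = "\<Sum>j<N. cis (real j * (2 * pi * of_int k / real N))"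
  have "(\<Sum>j<N. cos (real j * (2 * pi * of_int k / real N))) = Re ?S"
    "(\<Sum>j<N. sin (real j * (2 * pi * of_int k / real N))) = Im ?S"
    by (simp_all only: Re_sum Im_sum cis.sel)
  then show "(\<Sum>j<N. cos (real j * (2 * pi * of_int k / real N))) = (if int N dvd k then real N else 0)"
    "(\<Sum>j<N. sin (real j * (2 * pi * of_int k / real N))) = 0"
    unfolding sum_cis_roots[OF assms] by simp_all
qed

lemma discrete_trig_orthogonality:
  fixes N f g :: nat
  assumes "0 < f" "0 < g" "f + g < N"
  shows "(\<Sum>j<N. trig p (real j * (2 * pi * f / N)) * trig q (real j * (2 * pi * g / N)))
    = (if f = g \<and> p = q then N / 2 else 0)"
proof -
  have N: "0 < N"
    using assms by simp
  define \<phi> where "\<phi> k j = real j * (2 * pi * of_int k / real N)" for k :: int and j :: nat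
  have cos_sum: "(\<Sum>j<N. cos (\<phi> k j)) = (if int N dvd k then real N else 0)"
    and sin_sum: "(\<Sum>j<N. sin (\<phi> k j)) = 0" for k
    unfolding \<phi>_def by (rule sum_cos_sin_roots[OF N])+
  have minus: "\<phi> (int f) j - \<phi> (int g) j = \<phi> (int f - int g) j"
    and plus: "\<phi> (int f) j + \<phi> (int g) j = \<phi> (int f + int g) j" for j
    by (simp_all add: \<phi>_def algebra_simps add_divide_distrib diff_divide_distrib)
  have diff_dvd: "int N dvd int f - int g \<longleftrightarrow> f = g"
  proof
    assume dvd: "int N dvd int f - int g"
    show "f = g"
    proof (rule ccontr)
      assume "f \<noteq> g"
      then have "\<bar>int N\<bar> \<le> \<bar>int f - int g\<bar>"
        using dvd_imp_le_int[OF _ dvd] by simp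
      then show False
        using assms by linarith
    qed
  qed simp
  have sum_not_dvd: "\<not> int N dvd int f + int g"
    using assms zdvd_not_zless[of "int f + int g" "int N"] by simp
  have pointwise: "trig p (\<phi> (int f) j) * trig q (\<phi> (int g) j)
      = (if p = q then cos (\<phi> (int f - int g) j) + (if p then 1 else -1) * cos (\<phi> (int f + int g) j)
         else (if p then -1 else 1) * sin (\<phi> (int f - int g) j) + sin (\<phi> (int f + int g) j)) / 2" for j
    by (cases p; cases q)
      (simp_all add: trig_def cos_times_cos sin_times_sin cos_times_sin sin_times_cos minus plus)
  have "(\<Sum>j<N. trig p (\<phi> (int f) j) * trig q (\<phi> (int g) j))
      = (\<Sum>j<N. (if p = q then cos (\<phi> (int f - int g) j) + (if p then 1 else -1) * cos (\<phi> (int f + int g) j)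
         else (if p then -1 else 1) * sin (\<phi> (int f - int g) j) + sin (\<phi> (int f + int g) j)) / 2)"
    by (intro sum.cong refl pointwise)
  also have "\<dots> = (if p = q then (\<Sum>j<N. cos (\<phi> (int f - int g) j)) + (if p then 1 else -1) * (\<Sum>j<N. cos (\<phi> (int f + int g) j))
         else (if p then -1 else 1) * (\<Sum>j<N. sin (\<phi> (int f - int g) j)) + (\<Sum>j<N. sin (\<phi> (int f + int g) j))) / 2"
    by (cases p; cases q) (simp_all add: sum_divide_distrib[symmetric] sum.distrib sum_subtractf)
  also have "\<dots> = (if f = g \<and> p = q then N / 2 else 0)"
    by (simp add: cos_sum sin_sum diff_dvd sum_not_dvd)
  finally show ?thesis
    by (simp add: \<phi>_def)
qed

definition freqs :: "nat \<Rightarrow> nat set" where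
  "freqs m = (\<lambda>q. 3 ^ q) ` {..Suc m} \<union> (\<lambda>q. 5 * 3 ^ q) ` {..m}"

lemma coord_freq_block:
  assumes "r < 6"
  shows "coord_freq (6 * q + r) = 3 ^ q * (2 * (r div 2) + 1)"
proof -
  have "(6 * q + r) div 6 = q" "(6 * q + r) mod 6 = r"
    using assms by simp_all
  then show ?thesis
    by (simp add: coord_freq_def)
qed

lemma coord_freq_in_freqs:
  assumes "k < 6 * (m + 1)"
  shows "coord_freq k \<in> freqs m"
proof -
  define q where "q = k div 6"
  have q: "q \<le> m"
    using assms by (simp add: q_def)
  have freq: "coord_freq k = 3 ^ q * (2 * (k mod 6 div 2) + 1)"
    by (simp add: coord_freq_def q_def)
  consider "k mod 6 div 2 = 0" | "k mod 6 div 2 = 1" | "k mod 6 div 2 = 2"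
    by linarith
  then show ?thesis
  proof cases
    case 1
    then have "coord_freq k = 3 ^ q" "q \<le> Suc m"
      using freq q by simp_all
    then show ?thesis
      unfolding freqs_def by blast
  next
    case 2
    then have "coord_freq k = 3 ^ Suc q" "Suc q \<le> Suc m"
      using freq q by simp_all
    then show ?thesis
      unfolding freqs_def by blast
  next
    case 3
    then have "coord_freq k = 5 * 3 ^ q"
      using freq by simp
    then show ?thesis
      using q unfolding freqs_def by blast
  qed
qed

lemma ex_coord_of_freq:
  assumes "f \<in> freqs m"
  obtains k where "k < 6 * (m + 1)" "coord_freq k = f" "even k \<longleftrightarrow> p"
proof -
  define r :: nat where "r = (if p then 0 else 1)"
  have r: "r < 2" "even r \<longleftrightarrow> p"
    by (simp_all add: r_def)
  have freq: "coord_freq (6 * q + (2 * s + r)) = 3 ^ q * (2 * s + 1)" if "s < 3" for q s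
    using that r by (subst coord_freq_block) auto
  have even: "even (6 * q + (2 * s + r)) \<longleftrightarrow> p" for q s
    using r by simp
  from assms consider (pow) q where "q \<le> Suc m" "f = 3 ^ q" | (five) q where "q \<le> m" "f = 5 * 3 ^ q"
    unfolding freqs_def by blast
  then show ?thesis
  proof cases
    case pow
    show ?thesis
    proof (cases q)
      case 0
      then show ?thesis
        using pow that[of "6 * 0 + (2 * 0 + r)"] freq[of 0 0] even[of 0 0] r by simp
    next
      case (Suc q')
      then show ?thesis
        using pow that[of "6 * q' + (2 * 1 + r)"] freq[of 1 q'] even[of q' 1] r by simp
    qed
  next
    case five
    then show ?thesis
      using that[of "6 * q + (2 * 2 + r)"] freq[of 2 q] even[of q 2] r by (simp add: mult.commute)
  qed
qed

lemma freqs_bounds: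
  assumes "f \<in> freqs m"
  shows "0 < f" "f \<le> 5 * 3 ^ m"
proof -
  from assms consider (pow) q where "q \<le> Suc m" "f = 3 ^ q" | (five) q where "q \<le> m" "f = 5 * 3 ^ q"
    unfolding freqs_def by blast
  then have "0 < f \<and> f \<le> 5 * 3 ^ m"
  proof cases
    case pow
    then show ?thesis
      using power_increasing[OF pow(1), of "3::nat"] by simp
  next
    case five
    then show ?thesis
      using power_increasing[OF five(1), of "3::nat"] by simp
  qed
  then show "0 < f" "f \<le> 5 * 3 ^ m"
    by simp_all
qed

lemma pow3_neq_5_mult_pow3: "(3::nat) ^ a \<noteq> 5 * 3 ^ b"
proof (induction b arbitrary: a)
  case 0
  show ?case
  proof (cases a)
    case (Suc n)
    have "(3 * 3 ^ n) mod 3 \<noteq> (5::nat) mod 3"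
      by simp
    then show ?thesis
      using Suc by (metis mult_1_right power_0 power_Suc)
  qed simp
next
  case (Suc b)
  then show ?case
    by (cases a) simp_all
qed

lemma finite_freqs: "finite (freqs m)"
  by (simp add: freqs_def)

lemma card_freqs: "card (freqs m) = 2 * m + 3"
proof -
  have disjoint: "(\<lambda>q. (3::nat) ^ q) ` {..Suc m} \<inter> (\<lambda>q. 5 * 3 ^ q) ` {..m} = {}"
    using pow3_neq_5_mult_pow3 by blast
  have "card (freqs m) = card ((\<lambda>q. (3::nat) ^ q) ` {..Suc m}) + card ((\<lambda>q. (5::nat) * 3 ^ q) ` {..m})"
    unfolding freqs_def by (rule card_Un_disjoint[OF _ _ disjoint]) simp_all
  also have "\<dots> = (m + 2) + (m + 1)"
    by (simp add: card_image inj_on_def)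
  finally show ?thesis by simp
qed

text \<open>The coordinates of \<open>Psi_m\<close> repeat: \<open>cos (3^(q+1) t)\<close> occurs in \<open>U_3(3^q t)\<close> and in
  \<open>U_3(3^(q+1) t)\<close>.\<close>

definition freq_vec :: "('n::finite \<Rightarrow> nat) \<Rightarrow> nat \<times> bool \<Rightarrow> real ^ 'n" where
  "freq_vec idx fp = (\<chi> i. of_bool ((coord_freq (idx i), even (idx i)) = fp))"

lemma freq_vec_orthogonal: "fp \<noteq> fq \<Longrightarrow> freq_vec idx fp \<bullet> freq_vec idx fq = 0"
  by (auto simp: freq_vec_def inner_vec_def intro!: sum.neutral)

section \<open>The polytope\<close>

context
  fixes idx :: "'n::finite \<Rightarrow> nat" and m :: nat
  assumes idx: "bij_betw idx UNIV {..<6 * (m + 1)}"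
begin

lemma idx_less: "idx i < 6 * (m + 1)"
  using idx by (auto simp: bij_betw_def)

lemma idx_surj:
  assumes "k < 6 * (m + 1)"
  obtains i where "idx i = k"
  using idx assms by (metis bij_betw_def imageE lessThan_iff)

lemma freq_vec_nonzero:
  assumes "fp \<in> freqs m \<times> UNIV"
  shows "freq_vec idx fp \<noteq> 0"
proof -
  have "fst fp \<in> freqs m"
    using assms by auto
  then obtain k where k: "k < 6 * (m + 1)" "coord_freq k = fst fp" "even k \<longleftrightarrow> snd fp"
    by (rule ex_coord_of_freq)
  then obtain i where "idx i = k"
    using idx_surj by blast
  then have "freq_vec idx fp $ i = 1"
    using k by (simp add: freq_vec_def prod_eq_iff)
  then show ?thesis
    by auto
qed

lemma Psi_eq_sum_freq_vec:
  "Psi idx t = (\<Sum>fp\<in>freqs m \<times> UNIV. trig (snd fp) (real (fst fp) * t) *\<^sub>R freq_vec idx fp)"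
proof (subst vec_eq_iff, intro allI)
  fix i
  define fp where "fp = (coord_freq (idx i), even (idx i))"
  have "fp \<in> freqs m \<times> UNIV"
    using coord_freq_in_freqs[OF idx_less] by (simp add: fp_def)
  then have "(freqs m \<times> UNIV) \<inter> {fq. fp = fq} = {fp}"
    by auto
  then have "(\<Sum>fq\<in>freqs m \<times> UNIV. trig (snd fq) (real (fst fq) * t) * of_bool (fp = fq))
      = trig (snd fp) (real (fst fp) * t)"
    by (simp add: finite_freqs)
  then show "Psi idx t $ i = (\<Sum>fq\<in>freqs m \<times> UNIV. trig (snd fq) (real (fst fq) * t) *\<^sub>R freq_vec idx fq) $ i"
    by (simp add: Psi_def Psi_coord_eq freq_vec_def fp_def)
qed

lemma freq_vec_eq_sum_Psi:
  assumes "fp \<in> freqs m \<times> UNIV"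
  defines "N \<equiv> 4 * 3 ^ Suc m :: nat"
  shows "freq_vec idx fp
    = (\<Sum>j<N. (2 / N * trig (snd fp) (real j * (2 * pi * real (fst fp) / N))) *\<^sub>R Psi idx (grid_pt m (int j)))"
proof -
  have "(\<Sum>j<N. (2 / N * trig (snd fp) (real j * (2 * pi * real (fst fp) / N))) *\<^sub>R Psi idx (grid_pt m (int j))) $ i
    = freq_vec idx fp $ i" for i
  proof -
  define k where "k = idx i"
  have "fst fp \<in> freqs m" "coord_freq k \<in> freqs m"
    using assms(1) coord_freq_in_freqs[OF idx_less] by (auto simp: k_def)
  then have bounds: "0 < fst fp" "fst fp \<le> 5 * 3 ^ m" "0 < coord_freq k" "coord_freq k \<le> 5 * 3 ^ m"
    using freqs_bounds by blast+
  then have "fst fp + coord_freq k < N"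
    by (simp add: N_def)
  then have orth: "(\<Sum>j<N. trig (snd fp) (real j * (2 * pi * real (fst fp) / N)) * trig (even k) (real j * (2 * pi * real (coord_freq k) / N)))
      = (if fst fp = coord_freq k \<and> snd fp = even k then N / 2 else 0)"
    using bounds by (intro discrete_trig_orthogonality) simp_all
  have coord: "Psi idx (grid_pt m (int j)) $ i = trig (even k) (real j * (2 * pi * real (coord_freq k) / N))" for j
    by (simp add: Psi_def Psi_coord_eq k_def grid_pt_def grid_size_def N_def ac_simps)
  have "(\<Sum>j<N. (2 / N * trig (snd fp) (real j * (2 * pi * real (fst fp) / N))) *\<^sub>R Psi idx (grid_pt m (int j))) $ i
      = 2 / N * (\<Sum>j<N. trig (snd fp) (real j * (2 * pi * real (fst fp) / N)) * trig (even k) (real j * (2 * pi * real (coord_freq k) / N)))"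
    by (simp only: sum_component vector_scaleR_component coord sum_distrib_left mult.assoc real_scaleR_def)
  also have "\<dots> = 2 / N * (if fst fp = coord_freq k \<and> snd fp = even k then N / 2 else 0)"
    by (simp only: orth)
  also have "\<dots> = freq_vec idx fp $ i"
    by (auto simp: freq_vec_def k_def N_def prod_eq_iff)
  finally show ?thesis .
  qed
  then show ?thesis
    by (simp add: vec_eq_iff)
qed

lemma span_Psi_image: "span (Psi idx ` A_set m) = span (freq_vec idx ` (freqs m \<times> UNIV))"
  unfolding span_eq
proof (intro conjI subsetI)
  fix x
  assume "x \<in> Psi idx ` A_set m"
  then obtain t where "x = Psi idx t"
    by blast
  then show "x \<in> span (freq_vec idx ` (freqs m \<times> UNIV))"
    unfolding \<open>x = Psi idx t\<close> Psi_eq_sum_freq_vec by (intro span_sum span_mul span_base) auto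
next
  fix x
  assume "x \<in> freq_vec idx ` (freqs m \<times> UNIV)"
  then obtain fp where fp: "fp \<in> freqs m \<times> UNIV" "x = freq_vec idx fp"
    by blast
  have "Psi idx (grid_pt m (int j)) \<in> span (Psi idx ` A_set m)" if "j < 4 * 3 ^ Suc m" for j
  proof -
    have "int j < int (4 * 3 ^ Suc m)"
      using that by linarith
    then have "int j \<in> {0..<grid_size m}"
      by (simp add: grid_size_def)
    then show ?thesis
      unfolding A_set_eq by (intro span_base imageI)
  qed
  then show "x \<in> span (Psi idx ` A_set m)"
    unfolding fp(2) freq_vec_eq_sum_Psi[OF fp(1)] by (intro span_sum span_mul) auto
qed

lemma dim_Psi_image: "dim (Psi idx ` A_set m) = 4 * m + 6"
proof -
  let ?B = "freq_vec idx ` (freqs m \<times> UNIV)"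
  have "pairwise orthogonal ?B"
    unfolding pairwise_def orthogonal_def by (auto intro!: freq_vec_orthogonal)
  moreover have "0 \<notin> ?B"
    using freq_vec_nonzero by (metis imageE)
  ultimately have "independent ?B"
    by (rule pairwise_orthogonal_independent)
  have "inj_on (freq_vec idx) (freqs m \<times> UNIV)"
  proof (rule inj_onI)
    fix fp fq
    assume fp: "fp \<in> freqs m \<times> UNIV" and "freq_vec idx fp = freq_vec idx fq"
    show "fp = fq"
    proof (rule ccontr)
      assume "fp \<noteq> fq"
      then have "freq_vec idx fp \<bullet> freq_vec idx fp = 0"
        using freq_vec_orthogonal[of fp fq idx] \<open>freq_vec idx fp = freq_vec idx fq\<close> by simp
      then show False
        using freq_vec_nonzero[OF fp] by simp
    qed
  qed
  have "dim (Psi idx ` A_set m) = dim ?B"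
    using span_Psi_image by (rule span_eq_dim)
  also have "\<dots> = card (freqs m \<times> (UNIV :: bool set))"
    using dim_eq_card_independent[OF \<open>independent ?B\<close>] card_image[OF \<open>inj_on _ _\<close>] by simp
  also have "\<dots> = 4 * m + 6"
    by (simp add: card_cartesian_product card_freqs)
  finally show ?thesis .
qed

lemma inj_on_Psi: "inj_on (Psi idx) (A_set m)"
proof
  fix t t'
  assume "t \<in> A_set m" "t' \<in> A_set m" and eq: "Psi idx t = Psi idx t'"
  then obtain a b where ab: "a \<in> {0..<grid_size m}" "b \<in> {0..<grid_size m}" "t = grid_pt m a" "t' = grid_pt m b"
    unfolding A_set_eq by blast
  obtain i0 where "idx i0 = 0"
    using idx_surj[of 0] by auto
  obtain i1 where "idx i1 = 1"
    using idx_surj[of 1] by auto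
  have "Psi idx t $ i0 = Psi idx t' $ i0" "Psi idx t $ i1 = Psi idx t' $ i1"
    using eq by simp_all
  then have "sin t = sin t' \<and> cos t = cos t'"
    using \<open>idx i0 = 0\<close> \<open>idx i1 = 1\<close> by (simp add: Psi_def Psi_coord_def U3_coord_def)
  then obtain n :: int where "t = t' + 2 * pi * of_int n"
    using sin_cos_eq_iff by metis
  then have "grid_pt m (a - b) = 2 * pi * of_int n"
    using ab by (simp add: grid_pt_diff)
  then have "grid_size m dvd a - b"
    using grid_pt_eq_2pi_int_iff by blast
  then show "t = t'"
    using ab grid_index_dvd_iff by simp
qed

lemma singleton_exposed_face_iff:
  "{v} exposed_face_of convex hull (Psi idx ` A_set m) \<longleftrightarrow> v \<in> Psi idx ` A_set m"
proof
  assume "{v} exposed_face_of convex hull (Psi idx ` A_set m)"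
  then have "v extreme_point_of convex hull (Psi idx ` A_set m)"
    by (simp add: exposed_face_of_def face_of_singleton)
  then show "v \<in> Psi idx ` A_set m"
    by (rule extreme_point_of_convex_hull)
next
  assume "v \<in> Psi idx ` A_set m"
  then obtain a where a: "a \<in> {0..<grid_size m}" "v = Psi idx (grid_pt m a)"
    unfolding A_set_eq by blast
  have "Psi_affine m (\<lambda>t. 1 - cos (t - grid_pt m a))"
    by (intro Psi_affine_intros)
  then have "convex hull (Psi idx ` {t \<in> A_set m. 1 - cos (t - grid_pt m a) = 0})
      exposed_face_of convex hull (Psi idx ` A_set m)"
    by (rule Psi_affine_exposed_face[OF idx]) simp
  moreover have "{t \<in> A_set m. 1 - cos (t - grid_pt m a) = 0} = {grid_pt m a, grid_pt m a}"
    using a(1) by (intro zero_set_in_A_set) (simp_all add: cos_grid_pt_eq_1_iff flip: grid_pt_diff)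
  ultimately show "{v} exposed_face_of convex hull (Psi idx ` A_set m)"
    using a(2) by simp
qed

lemma edge_exposed_face:
  assumes t1: "t1 \<in> A_set m" and t2: "t2 \<in> A_set m" and "t1 \<noteq> t2"
    and not_antipodal: "\<not> (\<exists>k::int. t1 = t2 + pi + 2 * pi * of_int k)"
  shows "closed_segment (Psi idx t1) (Psi idx t2) exposed_face_of convex hull (Psi idx ` A_set m)"
proof -
  let ?N = "grid_size m"
  obtain a b where ab: "a \<in> {0..<?N}" "b \<in> {0..<?N}" "t1 = grid_pt m a" "t2 = grid_pt m b"
    using t1 t2 unfolding A_set_eq by blast
  have "\<not> ?N dvd a - b"
    using ab \<open>t1 \<noteq> t2\<close> grid_index_dvd_iff by blast
  moreover have "\<not> ?N dvd a - b - ?N div 2"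
  proof
    assume "?N dvd a - b - ?N div 2"
    then obtain k where "a - b - ?N div 2 = ?N * k" ..
    then have "a = b + ?N div 2 + ?N * k"
      by simp
    then have "t1 = t2 + pi + 2 * pi * of_int k"
      using ab by (simp add: grid_pt_add grid_pt_half grid_pt_grid_size_mult)
    then show False
      using not_antipodal by blast
  qed
  ultimately obtain f where f: "coset_certificate m ?N a b f"
    using edge_certificate by blast
  then have "convex hull (Psi idx ` {t \<in> A_set m. f t = 0}) exposed_face_of convex hull (Psi idx ` A_set m)"
    by (intro Psi_affine_exposed_face[OF idx]) (auto simp: coset_certificate_def A_set_eq)
  moreover have "{t \<in> A_set m. f t = 0} = {t1, t2}"
    using f ab by (simp add: zero_set_in_A_set coset_certificate_def)
  ultimately show ?thesis
    by (simp add: segment_convex_hull)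
qed

lemma aff_dim_edge:
  assumes "t1 \<in> A_set m" "t2 \<in> A_set m" "t1 \<noteq> t2"
  shows "aff_dim (closed_segment (Psi idx t1) (Psi idx t2)) = 1"
proof -
  have "Psi idx t1 \<noteq> Psi idx t2"
    using inj_onD[OF inj_on_Psi _ assms(1,2)] assms(3) by blast
  then show ?thesis
    by (simp add: segment_convex_hull aff_dim_convex_hull)
qed

end

theorem theorem1p2:
  fixes m :: nat and idx :: "'n::finite \<Rightarrow> nat"
  assumes "bij_betw idx (UNIV :: 'n set) {..<6 * (m + 1)}"
  defines "P \<equiv> convex hull (Psi idx ` A_set m)"
  shows "polytope P
    \<and> uminus ` P = P
    \<and> aff_dim P = int (4 * m + 6)
    \<and> {v. {v} exposed_face_of P} = Psi idx ` A_set m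
    \<and> card (Psi idx ` A_set m) = 4 * 3 ^ (m + 1)
    \<and> (\<forall>t1 t2. t1 \<in> A_set m \<longrightarrow> t2 \<in> A_set m \<longrightarrow> t1 \<noteq> t2 \<longrightarrow>
           \<not> (\<exists>k::int. t1 = t2 + pi + 2 * pi * of_int k) \<longrightarrow>
           closed_segment (Psi idx t1) (Psi idx t2) exposed_face_of P \<and>
           aff_dim (closed_segment (Psi idx t1) (Psi idx t2)) = 1)"
proof -
  note idx = assms(1)
  have "polytope P"
    unfolding P_def polytope_def using finite_A_set by blast
  moreover have "uminus ` P = P"
    unfolding P_def using uminus_Psi_image by (rule convex_hull_symmetric)
  moreover have "aff_dim P = int (4 * m + 6)"
    using aff_dim_symmetric[OF uminus_Psi_image[of idx m] Psi_grid_pt_in_image] dim_Psi_image[OF idx]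
    by (simp add: P_def aff_dim_convex_hull)
  moreover have "{v. {v} exposed_face_of P} = Psi idx ` A_set m"
    using singleton_exposed_face_iff[OF idx] by (auto simp: P_def)
  moreover have "card (Psi idx ` A_set m) = 4 * 3 ^ (m + 1)"
    using card_image[OF inj_on_Psi[OF idx]] card_A_set by simp
  ultimately show ?thesis
    using edge_exposed_face[OF idx] aff_dim_edge[OF idx] by (simp add: P_def)
qed

end
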